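(* Consider a run of Algorithm 1 (described in the context) against an adversary making at most $C$ corruptions. The total absolute loss $\sum |f(x_t)-q_t|$ over all rounds $t$ lying in correcting intervals is at most $L\cdot O(C)$, with an absolute constant.
   Context: Problem. Fix $L>0$ and $T\ge 2$. An adversary fixes an unknown $L$-Lipschitz $f:[0,1]\to[0,L]$. In each round $t=1,\dots,T$: the adversary chooses $x_t\in[0,1]$; the learner observes $x_t$ and guesses $q_t$; the adversary observes $q_t$ and sends $\sigma_t\in\{0,1\}$, equal to $\sigma(q_t-f(x_t))$ in uncorrupted rounds and $1-\sigma(q_t-f(x_t))$ in corrupted rounds, where $\sigma(u)=1$ if $u>0$ and $0$ if $u\le 0$; the adversary chooses adaptively which rounds to corrupt, at most $C$ in total ($C$ unknown to the learner). The absolute loss of round $t$ is $|f(x_t)-q_t|$. $\mathtt{len}(I)$ is the length of an interval $I$. $\mathtt{MidpointQuery}(I,Y)$, $Y=[a,b]$: guess $q=(a+b)/2$; if $\sigma_t=1$ return $Y\cap[0,q+L\,\mathtt{len}(I)]$, if $\sigma_t=0$ return $Y\cap[q-L\,\mathtt{len}(I),L]$. Algorithm 1. Maintain a partition of $[0,1]$ into intervals; each $I_j$ carries a checking interval $S_j$, range $Y_j$, and a "dubious" flag (initially unset). Initially: $8$ intervals of length $1/8$ (the root intervals), each with $S_j=Y_j=[0,L]$. In round $t$, with $I_j$ the partition interval containing $x_t$: (i) if some endpoint of $S_j$ has not been guessed in a round whose context lay in $I_j$, guess such an endpoint; if the guess was $\min(S_j)$ with $\sigma_t=1$ or $\max(S_j)$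 with $\sigma_t=0$, mark $I_j$ dubious; once both endpoints have been queried, set $Y_j=[0,L]$ if dubious and otherwise $Y_j=[\min(S_j)-L\,\mathtt{len}(I_j),\max(S_j)+L\,\mathtt{len}(I_j)]\cap[0,L]$. (ii) Otherwise set $Y_j:=\mathtt{MidpointQuery}(I_j,Y_j)$; if then $\mathtt{len}(Y_j)<\max(4L\,\mathtt{len}(I_j),4L/T)$, bisect $I_j$ into its two halves (its children, of which $I_j$ is the parent), which replace it, each with checking interval equal to the current $Y_j$ (endpoints unqueried, not dubious). Interval types. Say a round $t$ lies in $I_j$ if $I_j$ is the partition interval containing $x_t$ at round $t$. An interval $I_j$ is corrupted if some round lying in $I_j$ has a corrupted signal; it is correcting if its parent is corrupted and every round lying in $I_j$ is uncorrupted. *)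

theory Defs
  imports "HOL-Analysis.Analysis"
begin

text \<open>A node (k,i) denotes the dyadic interval [i/2^k, (i+1)/2^k) of [0,1]
  (closed at the right end when it contains 1). Roots are the nodes (3,i), i<8.\<close>

type_synonym node = "nat \<times> nat"

record nst =
  chk :: "real \<times> real"   \<comment> \<open>checking interval S_j = [fst, snd]\<close>
  rng :: "real \<times> real"   \<comment> \<open>range Y_j = [fst, snd]\<close>
  dub :: bool
  qlo :: bool               \<comment> \<open>min S_j already guessed in a round lying in I_j\<close>
  qhi :: bool               \<comment> \<open>max S_j already guessed in a round lying in I_j\<close>

type_synonym alg_state = "node set \<times> (node \<Rightarrow> nst)"

definition ilen :: "node \<Rightarrow> real" where
  "ilen n = 1 / 2 ^ fst n"

definition in_node :: "node \<Rightarrow> real \<Rightarrow> bool" where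
  "in_node n x \<longleftrightarrow>
     (real (snd n) / 2 ^ fst n \<le> x \<and> x < real (snd n + 1) / 2 ^ fst n)
     \<or> (x = 1 \<and> snd n + 1 = 2 ^ fst n)"

definition parent :: "node \<Rightarrow> node" where
  "parent n = (fst n - 1, snd n div 2)"

definition fresh :: "real \<times> real \<Rightarrow> nst" where
  "fresh Y = \<lparr>chk = Y, rng = Y, dub = False, qlo = False, qhi = False\<rparr>"

definition init_state :: "real \<Rightarrow> alg_state" where
  "init_state L = ({(3, i) | i. i < 8}, \<lambda>_. fresh (0, L))"

definition node_of :: "alg_state \<Rightarrow> real \<Rightarrow> node" where
  "node_of st x = (THE n. n \<in> fst st \<and> in_node n x)"

definition guess :: "alg_state \<Rightarrow> node \<Rightarrow> real" where
  "guess st n = (let d = snd st n in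
     if \<not> qlo d then fst (chk d)
     else if \<not> qhi d then snd (chk d)
     else (fst (rng d) + snd (rng d)) / 2)"

definition midpoint_query :: "real \<Rightarrow> real \<Rightarrow> real \<times> real \<Rightarrow> bool \<Rightarrow> real \<times> real" where
  "midpoint_query L l Y s = (let a = fst Y; b = snd Y; q = (a + b) / 2 in
     if s then (max a 0, min b (q + L * l)) else (max a (q - L * l), min b L))"

definition finish_check :: "real \<Rightarrow> real \<Rightarrow> nst \<Rightarrow> nst" where
  "finish_check L l d = (if qlo d \<and> qhi d then
      d\<lparr>rng := (if dub d then (0, L)
                 else (max 0 (fst (chk d) - L * l), min L (snd (chk d) + L * l)))\<rparr>
    else d)"

definition update :: "real \<Rightarrow> nat \<Rightarrow> alg_state \<Rightarrow> node \<Rightarrow> bool \<Rightarrow> alg_state" where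
  "update L T st n s = (let A = fst st; D = snd st; d = D n; l = ilen n in
     if \<not> qlo d then (A, D(n := finish_check L l (d\<lparr>qlo := True, dub := (dub d \<or> s)\<rparr>)))
     else if \<not> qhi d then (A, D(n := finish_check L l (d\<lparr>qhi := True, dub := (dub d \<or> \<not> s)\<rparr>)))
     else (let Y' = midpoint_query L l (rng d) s in
       if snd Y' - fst Y' < max (4 * L * l) (4 * L / real T) then
         ((A - {n}) \<union> {(fst n + 1, 2 * snd n), (fst n + 1, 2 * snd n + 1)},
          D(n := d\<lparr>rng := Y'\<rparr>, (fst n + 1, 2 * snd n) := fresh Y',
            (fst n + 1, 2 * snd n + 1) := fresh Y'))
       else (A, D(n := d\<lparr>rng := Y'\<rparr>))))"

definition signal :: "(real \<Rightarrow> real) \<Rightarrow> real \<Rightarrow> real \<Rightarrow> bool \<Rightarrow> bool" where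
  "signal f x q c = (if c then \<not> (q - f x > 0) else (q - f x > 0))"

fun run :: "real \<Rightarrow> nat \<Rightarrow> (real \<Rightarrow> real) \<Rightarrow> (nat \<Rightarrow> real) \<Rightarrow> (nat \<Rightarrow> bool) \<Rightarrow> nat \<Rightarrow> alg_state" where
  "run L T f xs cs 0 = init_state L"
| "run L T f xs cs (Suc m) =
     (let st = run L T f xs cs m; n = node_of st (xs (Suc m)); q = guess st n in
      update L T st n (signal f (xs (Suc m)) q (cs (Suc m))))"

definition round_node :: "real \<Rightarrow> nat \<Rightarrow> (real \<Rightarrow> real) \<Rightarrow> (nat \<Rightarrow> real) \<Rightarrow> (nat \<Rightarrow> bool) \<Rightarrow> nat \<Rightarrow> node" where
  "round_node L T f xs cs t = node_of (run L T f xs cs (t - 1)) (xs t)"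

definition guess_at :: "real \<Rightarrow> nat \<Rightarrow> (real \<Rightarrow> real) \<Rightarrow> (nat \<Rightarrow> real) \<Rightarrow> (nat \<Rightarrow> bool) \<Rightarrow> nat \<Rightarrow> real" where
  "guess_at L T f xs cs t = guess (run L T f xs cs (t - 1)) (round_node L T f xs cs t)"

definition corrupted_node :: "real \<Rightarrow> nat \<Rightarrow> (real \<Rightarrow> real) \<Rightarrow> (nat \<Rightarrow> real) \<Rightarrow> (nat \<Rightarrow> bool) \<Rightarrow> node \<Rightarrow> bool" where
  "corrupted_node L T f xs cs n \<longleftrightarrow> (\<exists>t\<in>{1..T}. round_node L T f xs cs t = n \<and> cs t)"

definition correcting_node :: "real \<Rightarrow> nat \<Rightarrow> (real \<Rightarrow> real) \<Rightarrow> (nat \<Rightarrow> real) \<Rightarrow> (nat \<Rightarrow> bool) \<Rightarrow> node \<Rightarrow> bool" where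
  "correcting_node L T f xs cs n \<longleftrightarrow> 3 < fst n \<and> corrupted_node L T f xs cs (parent n)
     \<and> (\<forall>t\<in>{1..T}. round_node L T f xs cs t = n \<longrightarrow> \<not> cs t)"

end

theory Submission
  imports Defs
begin

(* Fix an interval I whose rounds are all uncorrupted and pay for them with a potential: 7/2 L
   before I is created; while I belongs to the partition, L for each endpoint of its checking
   interval not yet queried plus 3/2 len(Y) (counted as 3/2 L until both endpoints are queried);
   0 once I has been bisected. An endpoint query loses at most L. As all signals in I are
   truthful, f stays within Y on I, so a midpoint query loses at most len(Y)/2; if I is not
   bisected afterwards, the new range has length at least 4 L len(I) and at most
   len(Y)/2 + L len(I), hence at most 2/3 len(Y), and the potential drops by at least the loss.
   So the loss in I is at most 7/2 L. A correcting interval is uncorrupted and is a child of the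
   interval of a corrupted round, so there are at most 2C of them, and the loss is at most 7 L C. *)

section \<open>Dyadic intervals\<close>

definition child0 :: "node \<Rightarrow> node" where "child0 n = (Suc (fst n), 2 * snd n)"
definition child1 :: "node \<Rightarrow> node" where "child1 n = (Suc (fst n), 2 * snd n + 1)"

lemma children_ne [simp]: "child0 n \<noteq> n" "child1 n \<noteq> n" "child0 n \<noteq> child1 n"
  by (simp_all add: child0_def child1_def prod_eq_iff)

lemma child_of_parent:
  assumes "0 < fst n"
  shows "n = child0 (parent n) \<or> n = child1 (parent n)"
proof -
  have "Suc (fst n - 1) = fst n" using assms by simp
  moreover have "snd n = 2 * (snd n div 2) \<or> snd n = 2 * (snd n div 2) + 1" by presburger
  ultimately show ?thesis by (auto simp: parent_def child0_def child1_def prod_eq_iff)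
qed

lemma in_node_iff:
  "in_node n x \<longleftrightarrow> (real (snd n) \<le> x * 2 ^ fst n \<and> x * 2 ^ fst n < real (snd n) + 1)
     \<or> (x = 1 \<and> real (snd n) + 1 = 2 ^ fst n)"
proof -
  have "snd n + 1 = 2 ^ fst n \<longleftrightarrow> real (snd n) + 1 = 2 ^ fst n"
    by (metis of_nat_1 of_nat_add of_nat_eq_iff of_nat_numeral of_nat_power)
  then show ?thesis
    by (simp add: in_node_def divide_le_eq less_divide_eq add.commute)
qed

lemma in_node_children: "in_node n x \<longleftrightarrow> in_node (child0 n) x \<or> in_node (child1 n) x"
  and in_node_child_disjoint: "\<not> (in_node (child0 n) x \<and> in_node (child1 n) x)"
proof -
  have odd: "2 * real (snd n) + 1 \<noteq> 2 * 2 ^ fst n"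
  proof
    assume "2 * real (snd n) + 1 = 2 * 2 ^ fst n"
    then have "2 * snd n + 1 = 2 * 2 ^ fst n"
      by (metis (mono_tags) of_nat_1 of_nat_add of_nat_eq_iff of_nat_mult of_nat_numeral of_nat_power)
    then show False by presburger
  qed
  show "in_node n x \<longleftrightarrow> in_node (child0 n) x \<or> in_node (child1 n) x"
    "\<not> (in_node (child0 n) x \<and> in_node (child1 n) x)"
    unfolding in_node_iff child0_def child1_def using odd by (auto simp: algebra_simps)
qed

lemma in_node_scaled_bounds:
  "in_node n x \<Longrightarrow> real (snd n) \<le> x * 2 ^ fst n \<and> x * 2 ^ fst n \<le> real (snd n) + 1"
  unfolding in_node_iff by (elim disjE conjE) (linarith, (hypsubst, simp only: mult_1_left, linarith))

lemma in_node_dist_le: "in_node n x \<Longrightarrow> in_node n y \<Longrightarrow> \<bar>x - y\<bar> \<le> ilen n"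
proof -
  assume "in_node n x" "in_node n y"
  then have "\<bar>x * 2 ^ fst n - y * 2 ^ fst n\<bar> \<le> 1"
    unfolding abs_le_iff using in_node_scaled_bounds[of n x] in_node_scaled_bounds[of n y] by linarith
  then have "\<bar>x - y\<bar> * 2 ^ fst n \<le> 1"
    by (simp add: abs_mult flip: left_diff_distrib)
  then show ?thesis by (simp add: ilen_def le_divide_eq)
qed

lemma ilen_nonneg: "0 \<le> ilen n"
  by (simp add: ilen_def)

inductive subnode :: "node \<Rightarrow> node \<Rightarrow> bool" where
  subnode_refl: "subnode n n"
| subnode_child0: "subnode a n \<Longrightarrow> subnode (child0 a) n"
| subnode_child1: "subnode a n \<Longrightarrow> subnode (child1 a) n"

lemma subnode_in_node: "subnode a n \<Longrightarrow> in_node a x \<Longrightarrow> in_node n x"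
  by (induction rule: subnode.induct) (use in_node_children in blast)+

lemma subnode_level_ge: "subnode a n \<Longrightarrow> fst n \<le> fst a"
  by (induction rule: subnode.induct) (auto simp: child0_def child1_def)

lemma subnode_childD:
  assumes "subnode c n" "c = child0 p \<or> c = child1 p"
  shows "c = n \<or> subnode p n"
  using assms by (cases rule: subnode.cases) (auto simp: child0_def child1_def, presburger+)

definition valid_node :: "node \<Rightarrow> bool" where
  "valid_node n \<longleftrightarrow> snd n < 2 ^ fst n"

lemma valid_node_real_le: "valid_node n \<Longrightarrow> real (snd n) + 1 \<le> 2 ^ fst n"
  unfolding valid_node_def
  by (metis Suc_leI add.commute of_nat_Suc of_nat_le_iff of_nat_numeral of_nat_power)

lemma valid_node_left_end:
  assumes "valid_node n"
  shows "real (snd n) / 2 ^ fst n \<in> {0..1} \<and> in_node n (real (snd n) / 2 ^ fst n)"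
  using valid_node_real_le[OF assms] assms by (simp add: in_node_iff valid_node_def)

lemma valid_node_children: "valid_node n \<Longrightarrow> valid_node (child0 n) \<and> valid_node (child1 n)"
  by (simp add: valid_node_def child0_def child1_def)

lemma valid_node_same_level_eq:
  assumes "valid_node (k, i)" "valid_node (k, j)" "in_node (k, i) x" "in_node (k, j) x"
  shows "i = j"
proof -
  have "real i + 1 \<le> 2 ^ k" "real j + 1 \<le> 2 ^ k"
    using valid_node_real_le assms(1,2) by force+
  with assms(3,4) have "real i = real j"
    unfolding in_node_iff by auto
  then show ?thesis by simp
qed

section \<open>The partition and the bounds maintained by the algorithm\<close>

definition dyadic_partition :: "node set \<Rightarrow> bool" where
  "dyadic_partition A \<longleftrightarrow> (\<forall>x\<in>{0..1}. \<exists>!a\<in>A. in_node a x) \<and> (\<forall>a\<in>A. valid_node a)"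

lemma dyadic_partition_unique:
  "dyadic_partition A \<Longrightarrow> x \<in> {0..1} \<Longrightarrow> a \<in> A \<Longrightarrow> b \<in> A \<Longrightarrow> in_node a x \<Longrightarrow> in_node b x \<Longrightarrow> a = b"
  unfolding dyadic_partition_def by blast

lemma node_of_in_partition:
  assumes "dyadic_partition A" "x \<in> {0..1}"
  shows "node_of (A, D) x \<in> A \<and> in_node (node_of (A, D) x) x"
  unfolding node_of_def fst_conv
  by (rule theI') (use assms in \<open>auto simp: dyadic_partition_def\<close>)

lemma dyadic_partition_level: "dyadic_partition {(k, i) | i. i < 2 ^ k}"
  unfolding dyadic_partition_def
proof (intro conjI ballI)
  fix x :: real assume x: "x \<in> {0..1}"
  obtain i where i: "i < 2 ^ k" "in_node (k, i) x"
  proof (cases "x = 1")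
    case True
    show ?thesis by (rule that[of "2 ^ k - 1"]) (simp_all add: True in_node_def)
  next
    case False
    define i where "i = nat \<lfloor>x * 2 ^ k\<rfloor>"
    have "real i = of_int \<lfloor>x * 2 ^ k\<rfloor>" using x by (simp add: i_def)
    then have "real i \<le> x * 2 ^ k" "x * 2 ^ k < real i + 1" by linarith+
    moreover have "x * 2 ^ k < 2 ^ k" using x False by simp
    ultimately have "real i < 2 ^ k" "in_node (k, i) x" by (linarith, simp add: in_node_iff)
    moreover from this(1) have "i < 2 ^ k" by (metis of_nat_less_iff of_nat_numeral of_nat_power)
    ultimately show ?thesis using that by blast
  qed
  with valid_node_same_level_eq show "\<exists>!a\<in>{(k, i) | i. i < 2 ^ k}. in_node a x"
    unfolding valid_node_def by fastforce
qed (auto simp: valid_node_def)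

lemma dyadic_partition_split:
  assumes P: "dyadic_partition A" and p: "p \<in> A"
  shows "dyadic_partition (A - {p} \<union> {child0 p, child1 p})"
  unfolding dyadic_partition_def
proof (intro conjI ballI)
  fix x :: real assume x: "x \<in> {0..1}"
  then obtain a where a: "a \<in> A" "in_node a x" "\<And>b. b \<in> A \<Longrightarrow> in_node b x \<Longrightarrow> b = a"
    using P unfolding dyadic_partition_def by blast
  show "\<exists>!b\<in>A - {p} \<union> {child0 p, child1 p}. in_node b x"
    using a p in_node_children[of p x] in_node_child_disjoint[of p x] by (cases "a = p") blast+
next
  fix b assume "b \<in> A - {p} \<union> {child0 p, child1 p}"
  then show "valid_node b" using P p valid_node_children unfolding dyadic_partition_def by blast
qed

definition reached :: "node set \<Rightarrow> node \<Rightarrow> bool" where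
  "reached A n \<longleftrightarrow> (\<exists>a\<in>A. subnode a n)"

lemma children_not_reached:
  assumes P: "dyadic_partition A" and p: "p \<in> A" and c: "c = child0 p \<or> c = child1 p"
  shows "\<not> reached A c"
proof
  assume "reached A c"
  then obtain a where a: "a \<in> A" "subnode a c" unfolding reached_def by blast
  define x where "x = real (snd a) / 2 ^ fst a"
  have x: "x \<in> {0..1}" "in_node a x"
    using valid_node_left_end P a(1) unfolding x_def dyadic_partition_def by blast+
  then have "in_node p x" using subnode_in_node[OF a(2)] c in_node_children by blast
  then have "a = p" using dyadic_partition_unique[OF P x(1) a(1) p x(2)] by blast
  moreover have "fst c \<le> fst a" using subnode_level_ge[OF a(2)] .
  ultimately show False using c by (auto simp: child0_def child1_def)
qed

lemma reached_split_iff: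
  assumes "p \<in> A" "n \<noteq> child0 p" "n \<noteq> child1 p"
  shows "reached (A - {p} \<union> {child0 p, child1 p}) n \<longleftrightarrow> reached A n"
  using assms subnode_childD subnode_child0 unfolding reached_def by blast

lemma update_cases:
  fixes L :: real and T :: nat and A D n s
  defines "Y' \<equiv> midpoint_query L (ilen n) (rng (D n)) s"
  obtains (check_low) "\<not> qlo (D n)"
    "update L T (A, D) n s =
       (A, D(n := finish_check L (ilen n) ((D n)\<lparr>qlo := True, dub := (dub (D n) \<or> s)\<rparr>)))"
  | (check_high) "qlo (D n)" "\<not> qhi (D n)"
    "update L T (A, D) n s =
       (A, D(n := finish_check L (ilen n) ((D n)\<lparr>qhi := True, dub := (dub (D n) \<or> \<not> s)\<rparr>)))"
  | (bisect) "qlo (D n)" "qhi (D n)" "snd Y' - fst Y' < max (4 * L * ilen n) (4 * L / real T)"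
    "update L T (A, D) n s = (A - {n} \<union> {child0 n, child1 n},
       D(n := (D n)\<lparr>rng := Y'\<rparr>, child0 n := fresh Y', child1 n := fresh Y'))"
  | (shrink) "qlo (D n)" "qhi (D n)" "\<not> snd Y' - fst Y' < max (4 * L * ilen n) (4 * L / real T)"
    "update L T (A, D) n s = (A, D(n := (D n)\<lparr>rng := Y'\<rparr>))"
  using that unfolding Y'_def
  by (cases "qlo (D n)"; cases "qhi (D n)") (auto simp: update_def Let_def child0_def child1_def)

lemma finish_check_simps [simp]:
  "chk (finish_check L l d) = chk d" "dub (finish_check L l d) = dub d"
  "qlo (finish_check L l d) = qlo d" "qhi (finish_check L l d) = qhi d"
  by (simp_all add: finish_check_def)

definition bounded_by :: "real \<Rightarrow> real \<times> real \<Rightarrow> bool" where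
  "bounded_by L Y \<longleftrightarrow> fst Y \<in> {0..L} \<and> snd Y \<in> {0..L}"

definition state_bounded :: "real \<Rightarrow> (node \<Rightarrow> nst) \<Rightarrow> bool" where
  "state_bounded L D \<longleftrightarrow> (\<forall>n. bounded_by L (chk (D n)) \<and> bounded_by L (rng (D n)))"

lemma bounded_by_midpoint_query:
  assumes "0 \<le> L" "0 \<le> l" "bounded_by L Y"
  shows "bounded_by L (midpoint_query L l Y s)"
proof -
  define c where "c = L * l"
  have "0 \<le> c" using assms(1,2) by (simp add: c_def)
  then show ?thesis
    using assms(3) unfolding bounded_by_def midpoint_query_def Let_def c_def[symmetric]
    by (auto simp: field_simps)
qed

lemma bounded_by_finish_check:
  assumes "0 \<le> L" "0 \<le> l" "bounded_by L (chk d)" "bounded_by L (rng d)"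
  shows "bounded_by L (rng (finish_check L l d))"
proof -
  define c where "c = L * l"
  have "0 \<le> c" using assms(1,2) by (simp add: c_def)
  then show ?thesis
    using assms(1,3,4) unfolding bounded_by_def finish_check_def c_def[symmetric] by auto
qed

lemma state_bounded_fun_upd:
  "state_bounded L D \<Longrightarrow> bounded_by L (chk d) \<Longrightarrow> bounded_by L (rng d) \<Longrightarrow> state_bounded L (D(n := d))"
  by (simp add: state_bounded_def)

lemma state_bounded_update:
  assumes "0 \<le> L" "state_bounded L D"
  shows "state_bounded L (snd (update L T (A, D) n s))"
proof -
  have "bounded_by L (chk (D n))" "bounded_by L (rng (D n))"
    using assms(2) unfolding state_bounded_def by blast+
  then show ?thesis
    by (cases rule: update_cases[of D n L T A s])
      (simp_all add: state_bounded_fun_upd assms fresh_def ilen_nonneg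
        bounded_by_finish_check bounded_by_midpoint_query)
qed

lemma dyadic_partition_update:
  assumes "dyadic_partition A" "n \<in> A"
  shows "dyadic_partition (fst (update L T (A, D) n s))"
  using dyadic_partition_split[OF assms]
  by (cases rule: update_cases[of D n L T A s]) (simp_all add: assms(1))

lemma round_node_Suc:
  "round_node L T f xs cs (Suc m) = node_of (run L T f xs cs m) (xs (Suc m))"
  by (simp add: round_node_def)

lemma run_Suc_round:
  "run L T f xs cs (Suc m) = update L T (run L T f xs cs m) (round_node L T f xs cs (Suc m))
     (signal f (xs (Suc m)) (guess_at L T f xs cs (Suc m)) (cs (Suc m)))"
  by (simp add: round_node_def guess_at_def Let_def)

lemma run_invariant:
  assumes "0 \<le> L" "\<forall>t\<in>{1..T}. xs t \<in> {0..1}" "m \<le> T"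
  shows "dyadic_partition (fst (run L T f xs cs m)) \<and> state_bounded L (snd (run L T f xs cs m))"
  using assms(3)
proof (induction m)
  case 0
  show ?case
    using dyadic_partition_level[of 3] assms(1)
    by (simp add: init_state_def state_bounded_def bounded_by_def fresh_def)
next
  case (Suc m)
  obtain A D where st: "run L T f xs cs m = (A, D)" by fastforce
  with Suc have "dyadic_partition A" "state_bounded L D" by auto
  moreover have "xs (Suc m) \<in> {0..1}" using assms(2) Suc.prems by simp
  ultimately show ?case
    using node_of_in_partition dyadic_partition_update state_bounded_update[OF assms(1)]
    unfolding run_Suc_round round_node_Suc st by auto
qed

section \<open>The potential of an uncorrupted interval\<close>

definition node_points :: "node \<Rightarrow> real set" where
  "node_points n = {y \<in> {0..1}. in_node n y}"

lemma lipschitz_on_node_points: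
  assumes "L-lipschitz_on {0..1} f" "y \<in> node_points n" "z \<in> node_points n"
  shows "\<bar>f y - f z\<bar> \<le> L * ilen n"
proof -
  have "\<bar>f y - f z\<bar> \<le> L * \<bar>y - z\<bar>"
    using lipschitz_onD[OF assms(1)] assms(2,3) by (auto simp: node_points_def dist_real_def)
  also have "\<dots> \<le> L * ilen n"
    using in_node_dist_le[of n y z] lipschitz_on_nonneg[OF assms(1)] assms(2,3)
    by (auto simp: node_points_def intro!: mult_left_mono)
  finally show ?thesis .
qed

definition sound_record :: "real \<Rightarrow> (real \<Rightarrow> real) \<Rightarrow> node \<Rightarrow> nst \<Rightarrow> bool" where
  "sound_record L f n d \<longleftrightarrow>
     (qlo d \<and> \<not> dub d \<longrightarrow> (\<forall>y\<in>node_points n. fst (chk d) - L * ilen n \<le> f y))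
   \<and> (qhi d \<and> \<not> dub d \<longrightarrow> (\<forall>y\<in>node_points n. f y \<le> snd (chk d) + L * ilen n))
   \<and> (qlo d \<and> qhi d \<longrightarrow> (\<forall>y\<in>node_points n. f y \<in> {fst (rng d)..snd (rng d)}))"

lemma sound_record_fresh: "sound_record L f n (fresh Y)"
  by (simp add: sound_record_def fresh_def)

lemma sound_record_finish_check:
  assumes "f ` {0..1} \<subseteq> {0..L}"
    and "\<And>y. qlo d \<Longrightarrow> \<not> dub d \<Longrightarrow> y \<in> node_points n \<Longrightarrow> fst (chk d) - L * ilen n \<le> f y"
    and "\<And>y. qhi d \<Longrightarrow> \<not> dub d \<Longrightarrow> y \<in> node_points n \<Longrightarrow> f y \<le> snd (chk d) + L * ilen n"
  shows "sound_record L f n (finish_check L (ilen n) d)"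
  using assms by (auto simp: sound_record_def finish_check_def node_points_def image_subset_iff)

lemma finish_check_width_le:
  "0 \<le> L \<Longrightarrow> qlo d \<Longrightarrow> qhi d \<Longrightarrow> snd (rng (finish_check L l d)) - fst (rng (finish_check L l d)) \<le> L"
  by (auto simp: finish_check_def min_def max_def)

definition node_potential :: "real \<Rightarrow> nst \<Rightarrow> real" where
  "node_potential L d = (if qlo d then 0 else L) + (if qhi d then 0 else L)
     + 3/2 * (if qlo d \<and> qhi d then max 0 (snd (rng d) - fst (rng d)) else L)"

lemma node_potential_fresh: "node_potential L (fresh Y) = 7/2 * L"
  by (simp add: node_potential_def fresh_def)

(* Outside the partition, a reached node has already been bisected and an unreached one is yet
   to be created. *)
definition potential :: "real \<Rightarrow> node \<Rightarrow> alg_state \<Rightarrow> real" where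
  "potential L n st = (if n \<in> fst st then node_potential L (snd st n)
     else if reached (fst st) n then 0 else 7/2 * L)"

lemma potential_nonneg: "0 \<le> L \<Longrightarrow> 0 \<le> potential L n st"
  by (simp add: potential_def node_potential_def)

lemma check_low_step:
  fixes d :: nst and L x :: real and f :: "real \<Rightarrow> real" and n :: node
  defines "d' \<equiv> finish_check L (ilen n) (d\<lparr>qlo := True, dub := (dub d \<or> fst (chk d) - f x > 0)\<rparr>)"
  assumes lip: "L-lipschitz_on {0..1} f" and range: "f ` {0..1} \<subseteq> {0..L}"
    and x: "x \<in> node_points n" and d: "\<not> qlo d" "bounded_by L (chk d)" "sound_record L f n d"
  shows "\<bar>f x - fst (chk d)\<bar> + node_potential L d' \<le> node_potential L d \<and> sound_record L f n d'"
proof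
  have L: "0 \<le> L" using lipschitz_on_nonneg[OF lip] .
  have "f x \<in> {0..L}" using x range by (auto simp: node_points_def image_subset_iff)
  then have "\<bar>f x - fst (chk d)\<bar> \<le> L" using d(2) by (auto simp: bounded_by_def)
  moreover have "node_potential L d' \<le> (if qhi d then 0 else L) + 3/2 * L"
    using finish_check_width_le[OF L, of _ "ilen n"] L by (simp add: d'_def node_potential_def)
  ultimately show "\<bar>f x - fst (chk d)\<bar> + node_potential L d' \<le> node_potential L d"
    using d(1) by (simp add: node_potential_def)
  show "sound_record L f n d'"
    unfolding d'_def
  proof (rule sound_record_finish_check[OF range], goal_cases)
    case (1 y)
    then show ?case using lipschitz_on_node_points[OF lip x 1(3)] by (simp add: abs_le_iff)
  next
    case (2 y)
    then show ?case using d(3) by (simp add: sound_record_def)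
  qed
qed

lemma check_high_step:
  fixes d :: nst and L x :: real and f :: "real \<Rightarrow> real" and n :: node
  defines "d' \<equiv> finish_check L (ilen n) (d\<lparr>qhi := True, dub := (dub d \<or> \<not> snd (chk d) - f x > 0)\<rparr>)"
  assumes lip: "L-lipschitz_on {0..1} f" and range: "f ` {0..1} \<subseteq> {0..L}"
    and x: "x \<in> node_points n" and d: "qlo d" "\<not> qhi d" "bounded_by L (chk d)" "sound_record L f n d"
  shows "\<bar>f x - snd (chk d)\<bar> + node_potential L d' \<le> node_potential L d \<and> sound_record L f n d'"
proof
  have L: "0 \<le> L" using lipschitz_on_nonneg[OF lip] .
  have "f x \<in> {0..L}" using x range by (auto simp: node_points_def image_subset_iff)
  then have "\<bar>f x - snd (chk d)\<bar> \<le> L" using d(3) by (auto simp: bounded_by_def)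
  moreover have "node_potential L d' \<le> 3/2 * L"
    using finish_check_width_le[OF L, of _ "ilen n"] L d(1) by (simp add: d'_def node_potential_def)
  ultimately show "\<bar>f x - snd (chk d)\<bar> + node_potential L d' \<le> node_potential L d"
    using d(1,2) by (simp add: node_potential_def)
  show "sound_record L f n d'"
    unfolding d'_def
  proof (rule sound_record_finish_check[OF range], goal_cases)
    case (1 y)
    then show ?case using d(4) by (simp add: sound_record_def)
  next
    case (2 y)
    then show ?case using lipschitz_on_node_points[OF lip x 2(3)] by (simp add: abs_le_iff)
  qed
qed

lemma midpoint_query_width_le:
  "snd (midpoint_query L l (a, b) s) - fst (midpoint_query L l (a, b) s) \<le> (b - a) / 2 + L * l"
  by (cases s) (simp_all add: midpoint_query_def Let_def field_simps min_def max_def)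

lemma midpoint_query_sound:
  assumes lip: "L-lipschitz_on {0..1} f" and range: "f ` {0..1} \<subseteq> {0..L}"
    and x: "x \<in> node_points n" and ab: "\<forall>y\<in>node_points n. f y \<in> {a..b}"
  defines "Y' \<equiv> midpoint_query L (ilen n) (a, b) ((a + b) / 2 - f x > 0)"
  shows "\<forall>y\<in>node_points n. f y \<in> {fst Y'..snd Y'}"
proof
  fix y assume y: "y \<in> node_points n"
  have "\<bar>f x - f y\<bar> \<le> L * ilen n" using lipschitz_on_node_points[OF lip x y] .
  moreover have "f y \<in> {0..L}" "f y \<in> {a..b}"
    using y range ab by (auto simp: node_points_def image_subset_iff)
  ultimately show "f y \<in> {fst Y'..snd Y'}"
    unfolding Y'_def midpoint_query_def Let_def by (auto simp: abs_le_iff field_simps)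
qed

lemma midpoint_loss_le:
  assumes "qlo d" "qhi d" "rng d = (a, b)" "sound_record L f n d" "x \<in> node_points n"
  shows "\<bar>f x - (a + b) / 2\<bar> \<le> (b - a) / 2" "node_potential L d = 3/2 * (b - a)"
proof -
  have "f x \<in> {a..b}" using assms by (simp add: sound_record_def)
  then show "\<bar>f x - (a + b) / 2\<bar> \<le> (b - a) / 2" "node_potential L d = 3/2 * (b - a)"
    using assms(1-3) by (auto simp: node_potential_def abs_le_iff field_simps)
qed

lemma update_own_node:
  fixes L x :: real and T :: nat and f :: "real \<Rightarrow> real"
  assumes lip: "L-lipschitz_on {0..1} f" and range: "f ` {0..1} \<subseteq> {0..L}"
    and n: "n \<in> A" and x: "x \<in> node_points n"
    and bounded: "bounded_by L (chk (D n))" and sound: "sound_record L f n (D n)"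
  defines "q \<equiv> guess (A, D) n"
  defines "st' \<equiv> update L T (A, D) n (q - f x > 0)"
  shows "\<bar>f x - q\<bar> + potential L n st' \<le> node_potential L (D n)
    \<and> (n \<in> fst st' \<longrightarrow> sound_record L f n (snd st' n))"
proof (cases rule: update_cases[of D n L T A "q - f x > 0"])
  case check_low
  then show ?thesis
    using check_low_step[OF lip range x _ _ sound] bounded n
    by (simp add: st'_def q_def guess_def potential_def)
next
  case check_high
  then show ?thesis
    using check_high_step[OF lip range x _ _ _ sound] bounded n
    by (simp add: st'_def q_def guess_def potential_def)
next
  case bisect
  obtain a b where ab: "rng (D n) = (a, b)" by fastforce
  have q: "q = (a + b) / 2" using bisect(1,2) ab by (simp add: q_def guess_def)
  note loss = midpoint_loss_le[OF bisect(1,2) ab sound x, folded q]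
  have "\<bar>f x - q\<bar> \<le> node_potential L (D n)"
    using loss abs_ge_zero[of "f x - q"] by linarith
  moreover have "n \<notin> fst st'" "reached (fst st') n"
    using bisect(4) subnode_child0[OF subnode_refl, of n] children_ne(1,2)[THEN not_sym]
    by (auto simp: st'_def reached_def)
  ultimately show ?thesis by (simp add: potential_def)
next
  case shrink
  obtain a b where ab: "rng (D n) = (a, b)" by fastforce
  have q: "q = (a + b) / 2" using shrink(1,2) ab by (simp add: q_def guess_def)
  note loss = midpoint_loss_le[OF shrink(1,2) ab sound x, folded q]
  define Y' where "Y' = midpoint_query L (ilen n) (rng (D n)) (q - f x > 0)"
  have st': "st' = (A, D(n := (D n)\<lparr>rng := Y'\<rparr>))"
    using shrink(4) by (simp add: st'_def Y'_def)
  have Y': "Y' = midpoint_query L (ilen n) (a, b) ((a + b) / 2 - f x > 0)"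
    unfolding Y'_def ab q ..
  have "4 * (L * ilen n) \<le> snd Y' - fst Y'"
    using shrink(3) by (simp add: Y'_def mult.assoc)
  moreover have "snd Y' - fst Y' \<le> (b - a) / 2 + L * ilen n"
    using midpoint_query_width_le[of L "ilen n" a b] by (simp add: Y')
  moreover have "0 \<le> L * ilen n" using lipschitz_on_nonneg[OF lip] ilen_nonneg by simp
  ultimately have "0 \<le> snd Y' - fst Y'" "snd Y' - fst Y' \<le> 2/3 * (b - a)"
    by linarith+
  then have "node_potential L ((D n)\<lparr>rng := Y'\<rparr>) \<le> b - a"
    using shrink(1,2) by (simp add: node_potential_def)
  moreover have "\<forall>y\<in>node_points n. f y \<in> {a..b}"
    using sound shrink(1,2) ab by (simp add: sound_record_def)
  then have "sound_record L f n ((D n)\<lparr>rng := Y'\<rparr>)"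
    using sound midpoint_query_sound[OF lip range x] by (simp add: sound_record_def Y')
  ultimately show ?thesis
    using loss n by (simp add: st' potential_def)
qed

lemma update_other_node:
  fixes T :: nat and s :: bool
  assumes P: "dyadic_partition A" and p: "p \<in> A" and "n \<noteq> p"
    and sound: "n \<in> A \<Longrightarrow> sound_record L f n (D n)"
  defines "st' \<equiv> update L T (A, D) p s"
  shows "potential L n st' \<le> potential L n (A, D) \<and> (n \<in> fst st' \<longrightarrow> sound_record L f n (snd st' n))"
proof (cases rule: update_cases[of D p L T A s])
  case bisect
  show ?thesis
  proof (cases "n = child0 p \<or> n = child1 p")
    case True
    then have "\<not> reached A n" "n \<notin> A"
      using children_not_reached[OF P p] subnode_refl unfolding reached_def by blast+
    then show ?thesis
      using True bisect(4) by (auto simp: st'_def potential_def node_potential_fresh sound_record_fresh)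
  next
    case False
    then show ?thesis
      using bisect(4) reached_split_iff[OF p] \<open>n \<noteq> p\<close> sound
      by (simp add: st'_def potential_def)
  qed
qed (use \<open>n \<noteq> p\<close> sound in \<open>simp_all add: st'_def potential_def\<close>)

definition node_loss ::
  "real \<Rightarrow> nat \<Rightarrow> (real \<Rightarrow> real) \<Rightarrow> (nat \<Rightarrow> real) \<Rightarrow> (nat \<Rightarrow> bool) \<Rightarrow> node \<Rightarrow> nat \<Rightarrow> real"
where
  "node_loss L T f xs cs n m =
     (\<Sum>t | t \<in> {1..m} \<and> round_node L T f xs cs t = n. \<bar>f (xs t) - guess_at L T f xs cs t\<bar>)"

lemma node_loss_Suc:
  "node_loss L T f xs cs n (Suc m) = node_loss L T f xs cs n m
     + (if round_node L T f xs cs (Suc m) = n then \<bar>f (xs (Suc m)) - guess_at L T f xs cs (Suc m)\<bar> else 0)"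
proof (cases "round_node L T f xs cs (Suc m) = n")
  case True
  then have "{t. t \<in> {1..Suc m} \<and> round_node L T f xs cs t = n} =
      insert (Suc m) {t. t \<in> {1..m} \<and> round_node L T f xs cs t = n}"
    by (auto simp: le_Suc_eq)
  then show ?thesis using True by (simp add: node_loss_def)
next
  case False
  then have "{t. t \<in> {1..Suc m} \<and> round_node L T f xs cs t = n} =
      {t. t \<in> {1..m} \<and> round_node L T f xs cs t = n}"
    by (auto simp: le_Suc_eq)
  then show ?thesis using False by (simp add: node_loss_def)
qed

lemma uncorrupted_node_invariant:
  assumes lip: "L-lipschitz_on {0..1} f" and range: "f ` {0..1} \<subseteq> {0..L}"
    and X: "\<forall>t\<in>{1..T}. xs t \<in> {0..1}"
    and uncorrupted: "\<forall>t\<in>{1..T}. round_node L T f xs cs t = n \<longrightarrow> \<not> cs t"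
    and "m \<le> T"
  shows "node_loss L T f xs cs n m + potential L n (run L T f xs cs m) \<le> 7/2 * L
    \<and> (n \<in> fst (run L T f xs cs m) \<longrightarrow> sound_record L f n (snd (run L T f xs cs m) n))"
  using \<open>m \<le> T\<close>
proof (induction m)
  case 0
  then show ?case
    using lipschitz_on_nonneg[OF lip]
    by (simp add: node_loss_def potential_def init_state_def node_potential_fresh sound_record_fresh)
next
  case (Suc m)
  obtain A D where st: "run L T f xs cs m = (A, D)" by fastforce
  with Suc have IH: "node_loss L T f xs cs n m + potential L n (A, D) \<le> 7/2 * L"
    "n \<in> A \<Longrightarrow> sound_record L f n (D n)" by auto
  from st Suc.prems have P: "dyadic_partition A" and B: "state_bounded L D"
    using run_invariant[OF lipschitz_on_nonneg[OF lip] X] by (metis fst_conv snd_conv Suc_leD)+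
  define x where "x = xs (Suc m)"
  define p where "p = round_node L T f xs cs (Suc m)"
  have "x \<in> {0..1}" using X Suc.prems by (simp add: x_def)
  then have p: "p \<in> A" "x \<in> node_points p"
    using node_of_in_partition[OF P] by (simp_all add: p_def x_def round_node_Suc st node_points_def)
  have run: "run L T f xs cs (Suc m) = update L T (A, D) p (signal f x (guess_at L T f xs cs (Suc m)) (cs (Suc m)))"
    unfolding run_Suc_round st p_def x_def ..
  show ?case
  proof (cases "p = n")
    case True
    with p have n: "n \<in> A" "x \<in> node_points n" by simp_all
    have "bounded_by L (chk (D n))" using B unfolding state_bounded_def by blast
    note own = update_own_node[where D = D and T = T, OF lip range n this IH(2)[OF n(1)]]
    have "\<not> cs (Suc m)" using uncorrupted Suc.prems True by (simp add: p_def)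
    moreover have "guess_at L T f xs cs (Suc m) = guess (A, D) n"
      using True by (simp add: guess_at_def p_def round_node_def st)
    ultimately show ?thesis
      using own IH(1) n(1) True
      unfolding run node_loss_Suc by (simp add: signal_def p_def[symmetric] x_def[symmetric] potential_def)
  next
    case False
    then have "n \<noteq> p" by simp
    note other = update_other_node[where D = D and T = T and
        s = "signal f x (guess_at L T f xs cs (Suc m)) (cs (Suc m))", OF P p(1) this IH(2)]
    show ?thesis
      using other IH(1) False unfolding run node_loss_Suc by (simp add: p_def[symmetric])
  qed
qed

lemma uncorrupted_node_loss_le:
  assumes lip: "L-lipschitz_on {0..1} f" and "f ` {0..1} \<subseteq> {0..L}"
    and "\<forall>t\<in>{1..T}. xs t \<in> {0..1}"
    and "\<forall>t\<in>{1..T}. round_node L T f xs cs t = n \<longrightarrow> \<not> cs t"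
  shows "node_loss L T f xs cs n T \<le> 7/2 * L"
  using uncorrupted_node_invariant[OF assms order_refl]
    potential_nonneg[OF lipschitz_on_nonneg[OF lip], of n "run L T f xs cs T"]
  by linarith

section \<open>Correcting intervals\<close>

lemma loss_grouped_by_node:
  "(\<Sum>t | t \<in> {1..T} \<and> Q (round_node L T f xs cs t). \<bar>f (xs t) - guess_at L T f xs cs t\<bar>)
   = (\<Sum>n \<in> round_node L T f xs cs ` {t \<in> {1..T}. Q (round_node L T f xs cs t)}. node_loss L T f xs cs n T)"
  (is "(\<Sum>t\<in>?S. ?loss t) = (\<Sum>n\<in>?rn ` ?S. _)")
proof -
  have "(\<Sum>t\<in>?S. ?loss t) = (\<Sum>n\<in>?rn ` ?S. \<Sum>t | t \<in> ?S \<and> ?rn t = n. ?loss t)"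
    by (rule sum.image_gen) simp
  also have "\<dots> = (\<Sum>n\<in>?rn ` ?S. node_loss L T f xs cs n T)"
    unfolding node_loss_def by (intro sum.cong refl arg_cong2[where f = sum]) auto
  finally show ?thesis .
qed

lemma card_correcting_nodes_le:
  "card (round_node L T f xs cs ` {t \<in> {1..T}. correcting_node L T f xs cs (round_node L T f xs cs t)})
     \<le> 2 * card {t \<in> {1..T}. cs t}"
proof -
  define P where "P = round_node L T f xs cs ` {t \<in> {1..T}. cs t}"
  have "round_node L T f xs cs ` {t \<in> {1..T}. correcting_node L T f xs cs (round_node L T f xs cs t)}
      \<subseteq> (\<Union>p\<in>P. {child0 p, child1 p})"
  proof (rule image_subsetI)
    fix t assume "t \<in> {t \<in> {1..T}. correcting_node L T f xs cs (round_node L T f xs cs t)}"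
    then obtain u where "u \<in> {1..T}" "cs u" "round_node L T f xs cs u = parent (round_node L T f xs cs t)"
      "0 < fst (round_node L T f xs cs t)"
      unfolding correcting_node_def corrupted_node_def by auto
    then have "parent (round_node L T f xs cs t) \<in> P" unfolding P_def by force
    with child_of_parent[OF \<open>0 < fst (round_node L T f xs cs t)\<close>]
    show "round_node L T f xs cs t \<in> (\<Union>p\<in>P. {child0 p, child1 p})" by blast
  qed
  then have "card (round_node L T f xs cs ` {t \<in> {1..T}. correcting_node L T f xs cs (round_node L T f xs cs t)})
      \<le> card (\<Union>p\<in>P. {child0 p, child1 p})"
    by (rule card_mono[rotated]) (simp add: P_def)
  also have "\<dots> \<le> (\<Sum>p\<in>P. card {child0 p, child1 p})"
    by (rule card_UN_le) (simp add: P_def)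
  also have "\<dots> = 2 * card P" by simp
  also have "card P \<le> card {t \<in> {1..T}. cs t}"
    unfolding P_def by (rule card_image_le) simp
  finally show ?thesis by simp
qed

theorem lemma26:
  "\<exists>K::real. \<forall>(L::real) (T::nat) (C::nat) (f::real \<Rightarrow> real) (xs::nat \<Rightarrow> real) (cs::nat \<Rightarrow> bool).
     L > 0 \<longrightarrow> T \<ge> 2 \<longrightarrow> L-lipschitz_on {0..1} f \<longrightarrow> f ` {0..1} \<subseteq> {0..L}
     \<longrightarrow> (\<forall>t\<in>{1..T}. xs t \<in> {0..1}) \<longrightarrow> card {t\<in>{1..T}. cs t} \<le> C
     \<longrightarrow> (\<Sum>t | t \<in> {1..T} \<and> correcting_node L T f xs cs (round_node L T f xs cs t).
           \<bar>f (xs t) - guess_at L T f xs cs t\<bar>) \<le> K * L * real C"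
proof (intro exI[of _ 7] allI impI)
  fix L :: real and T C :: nat and f :: "real \<Rightarrow> real" and xs :: "nat \<Rightarrow> real" and cs :: "nat \<Rightarrow> bool"
  assume "L > 0" "T \<ge> 2" and lip: "L-lipschitz_on {0..1} f" and range: "f ` {0..1} \<subseteq> {0..L}"
    and X: "\<forall>t\<in>{1..T}. xs t \<in> {0..1}" and C: "card {t\<in>{1..T}. cs t} \<le> C"
  let ?N = "round_node L T f xs cs ` {t \<in> {1..T}. correcting_node L T f xs cs (round_node L T f xs cs t)}"
  have "node_loss L T f xs cs n T \<le> 7/2 * L" if "n \<in> ?N" for n
    using that uncorrupted_node_loss_le[OF lip range X, of cs n] unfolding correcting_node_def by auto
  then have "(\<Sum>n\<in>?N. node_loss L T f xs cs n T) \<le> real (card ?N) * (7/2 * L)"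
    by (rule sum_bounded_above)
  also have "\<dots> \<le> real (2 * C) * (7/2 * L)"
    using card_correcting_nodes_le[of L T f xs cs] C \<open>L > 0\<close> by (intro mult_right_mono) simp_all
  finally show "(\<Sum>t | t \<in> {1..T} \<and> correcting_node L T f xs cs (round_node L T f xs cs t).
      \<bar>f (xs t) - guess_at L T f xs cs t\<bar>) \<le> 7 * L * real C"
    unfolding loss_grouped_by_node by simp
qed

end
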